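(* Let $\varepsilon,\delta\in(0,1)$ and $\alpha\ge1$. There is a one-pass streaming algorithm that, on any strict turnstile stream on $[n]$ with frequency vector $f$ satisfying the $L_1$ $\alpha$-property, outputs a $(1\pm\varepsilon)$-approximation of $\|f\|_1$ with probability at least $1-\delta$, using $O(\log(\alpha/\varepsilon)+\log(1/\delta)+\log\log n)$ bits of space.
   Context: A data stream on universe $[n]$ is a sequence of $m$ updates $(i_t,\Delta_t)\in[n]\times\{-M,\dots,M\}$; the frequency vector $f\in\mathbb{R}^n$ starts at $0$ and update $(i_t,\Delta_t)$ adds $\Delta_t$ to $f_{i_t}$. It is assumed that $\log(mM)=O(\log n)$. A strict turnstile stream is one in which updates may be negative but every coordinate of the frequency vector is non-negative at all times. The insertion vector $I$ is the frequency vector of the substream of positive updates and the deletion vector $D$ is the entrywise absolute value of the frequency vector of the substream of negative updates, so $f=I-D$. The stream has the $L_1$ $\alpha$-property if $\|I+D\|_1\le\alpha\|f\|_1$. Space is measured in bits. *)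

theory Defs
  imports "HOL-Probability.Probability"
begin

text \<open>Streams: an update is a pair (i, Delta) with i in [n] = {1..n}.\<close>
type_synonym update = "nat \<times> int"

text \<open>The initial memory is random, each update maps the memory to a random new memory
  (fresh coins per step), and the output is a (possibly random) real computed from the
  final memory.\<close>
record stream_alg =
  init :: "bool list pmf"
  step :: "bool list \<Rightarrow> update \<Rightarrow> bool list pmf"
  out_fn :: "bool list \<Rightarrow> real pmf"

definition run :: "stream_alg \<Rightarrow> update list \<Rightarrow> bool list pmf" where
  "run A xs = foldl (\<lambda>p u. bind_pmf p (\<lambda>s. step A s u)) (init A) xs"

definition result :: "stream_alg \<Rightarrow> update list \<Rightarrow> real pmf" where
  "result A xs = bind_pmf (run A xs) (out_fn A)"

definition freq :: "update list \<Rightarrow> nat \<Rightarrow> int" where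
  "freq xs i = sum_list (map snd (filter (\<lambda>u. fst u = i) xs))"

definition ins_vec :: "update list \<Rightarrow> nat \<Rightarrow> int" where
  "ins_vec xs i = freq (filter (\<lambda>u. snd u > 0) xs) i"

definition del_vec :: "update list \<Rightarrow> nat \<Rightarrow> int" where
  "del_vec xs i = \<bar>freq (filter (\<lambda>u. snd u < 0) xs) i\<bar>"

definition l1_norm :: "nat \<Rightarrow> (nat \<Rightarrow> int) \<Rightarrow> real" where
  "l1_norm n f = (\<Sum>i\<in>{1..n}. real_of_int \<bar>f i\<bar>)"

definition valid_stream :: "nat \<Rightarrow> nat \<Rightarrow> nat \<Rightarrow> update list \<Rightarrow> bool" where
  "valid_stream n m M xs \<longleftrightarrow> length xs = m \<and>
     (\<forall>u\<in>set xs. fst u \<in> {1..n} \<and> \<bar>snd u\<bar> \<le> int M)"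

definition strict_turnstile :: "update list \<Rightarrow> bool" where
  "strict_turnstile xs \<longleftrightarrow> (\<forall>k\<le>length xs. \<forall>i. freq (take k xs) i \<ge> 0)"

definition alpha_property :: "real \<Rightarrow> nat \<Rightarrow> update list \<Rightarrow> bool" where
  "alpha_property \<alpha> n xs \<longleftrightarrow>
     l1_norm n (\<lambda>i. ins_vec xs i + del_vec xs i) \<le> \<alpha> * l1_norm n (freq xs)"

definition space_bound :: "stream_alg \<Rightarrow> update list set \<Rightarrow> real \<Rightarrow> bool" where
  "space_bound A S s \<longleftrightarrow> (\<forall>xs\<in>S. \<forall>k\<le>length xs. \<forall>\<sigma>\<in>set_pmf (run A (take k xs)).
      real (length \<sigma>) \<le> s)"

end

theory Submission
  imports Defs "HOL-Library.Log_Nat"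
begin

(* Run two randomized approximate counters, one for the total insertion weight I and one for the
   total deletion weight D, and output their difference. In a strict turnstile stream
   ||f||_1 = I - D, and the alpha-property gives I + D <= alpha ||f||_1. A counter keeps its value
   on a grid of relative spacing about 1/K and rounds to it unbiasedly; a potential argument bounds
   its mean square error by 5 S^2 / K, where S is the true count. Hence the output has mean square
   error at most 10 (I^2 + D^2) / K <= 10 alpha^2 ||f||_1^2 / K, and with K ~ alpha^2 / (eps^2 delta)
   Chebyshev's inequality gives the (1 +- eps) guarantee with probability 1 - delta. A grid point is
   an exponent below log (m M) = O(log n) together with a mantissa below 2 K, so a counter needs
   O(log K + log log n) bits. When delta is so close to 1 that a uniform guess in {0..m M} already
   succeeds, no memory is needed; this covers the parameters where the space budget degenerates. *)

lemma integral_bind_pmf_finite: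
  fixes f :: "'b \<Rightarrow> real"
  assumes fin: "finite (set_pmf M)" and finN: "\<And>x. x \<in> set_pmf M \<Longrightarrow> finite (set_pmf (N x))"
  shows "(\<integral>y. f y \<partial>bind_pmf M N) = (\<integral>x. (\<integral>y. f y \<partial>N x) \<partial>M)"
proof -
  define U where "U = (\<Union>x\<in>set_pmf M. set_pmf (N x))"
  have "finite U" using fin finN unfolding U_def by auto
  define g where "g y = f y * indicator U y" for y
  have g_bounded: "\<bar>g y\<bar> \<le> (\<Sum>u\<in>U. \<bar>f u\<bar>)" for y
    using \<open>finite U\<close> by (cases "y \<in> U") (auto simp: g_def intro: member_le_sum sum_nonneg)
  have "(\<integral>y. g y \<partial>bind_pmf M N) = (\<integral>x. (\<integral>y. g y \<partial>N x) \<partial>M)"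
    unfolding measure_pmf_bind
    using g_bounded measurable_measure_pmf[of N]
    by (intro integral_bind[where K="count_space UNIV" and B="\<Sum>u\<in>U. \<bar>f u\<bar>" and B'=1])
      (auto simp: measure_pmf.emeasure_space_1 intro: prob_space_imp_subprob_space
        cong: measurable_cong_sets)
  moreover have "(\<integral>y. f y \<partial>bind_pmf M N) = (\<integral>y. g y \<partial>bind_pmf M N)"
    by (intro integral_cong_AE) (auto simp: AE_measure_pmf_iff g_def U_def split: split_indicator)
  moreover have "(\<integral>x. (\<integral>y. f y \<partial>N x) \<partial>M) = (\<integral>x. (\<integral>y. g y \<partial>N x) \<partial>M)"
    by (intro integral_cong_AE)
      (auto simp: AE_measure_pmf_iff g_def U_def split: split_indicator intro!: integral_cong_AE)
  ultimately show ?thesis by simp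
qed

lemma integral_mono_pmf_finite:
  fixes f g :: "'a \<Rightarrow> real"
  assumes "finite (set_pmf p)" "\<And>x. x \<in> set_pmf p \<Longrightarrow> f x \<le> g x"
  shows "(\<integral>x. f x \<partial>p) \<le> (\<integral>x. g x \<partial>p)"
  using assms by (intro integral_mono_AE) (auto simp: AE_measure_pmf_iff intro: integrable_measure_pmf_finite)

lemma prob_close_ge_of_mean_square:
  fixes g :: "'a \<Rightarrow> real"
  assumes fin: "finite (set_pmf p)" and "0 < \<epsilon>" "0 \<le> \<delta>" "0 \<le> L"
    and mse: "(\<integral>x. (g x - L)^2 \<partial>p) \<le> \<epsilon>^2 * \<delta> * L^2"
  shows "1 - \<delta> \<le> measure_pmf.prob p {x. \<bar>g x - L\<bar> \<le> \<epsilon> * L}"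
proof (cases "L = 0")
  case True
  have int: "integrable p (\<lambda>x. (g x - L)^2)" using fin by (rule integrable_measure_pmf_finite)
  have "(\<integral>x. (g x - L)^2 \<partial>p) = 0" using mse True by (simp add: antisym integral_nonneg_AE)
  then have "AE x in p. (g x - L)^2 = 0" by (subst (asm) integral_nonneg_eq_0_iff_AE[OF int]) auto
  then have "AE x in p. \<bar>g x - L\<bar> \<le> \<epsilon> * L" by eventually_elim (simp add: True)
  then have "measure_pmf.prob p {x. \<bar>g x - L\<bar> \<le> \<epsilon> * L} = 1" by (subst measure_pmf.prob_eq_1) auto
  then show ?thesis using \<open>0 \<le> \<delta>\<close> by simp
next
  case False
  define c where "c = \<epsilon>^2 * L^2"
  have c: "c > 0" unfolding c_def using False \<open>0 < \<epsilon>\<close> by simp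
  have "UNIV - {x. \<bar>g x - L\<bar> \<le> \<epsilon> * L} \<subseteq> {x \<in> space p. c \<le> (g x - L)^2}"
  proof clarsimp
    fix x assume "\<not> \<bar>g x - L\<bar> \<le> \<epsilon> * L"
    then have "(\<epsilon> * L)^2 \<le> \<bar>g x - L\<bar>^2"
      using \<open>0 < \<epsilon>\<close> \<open>0 \<le> L\<close> by (intro power_mono) auto
    then show "c \<le> (g x - L)^2" by (simp add: c_def power_mult_distrib)
  qed
  then have "measure_pmf.prob p (UNIV - {x. \<bar>g x - L\<bar> \<le> \<epsilon> * L}) \<le> measure_pmf.prob p {x \<in> space p. c \<le> (g x - L)^2}"
    by (intro measure_pmf.finite_measure_mono) auto
  also have "\<dots> \<le> (\<integral>x. (g x - L)^2 \<partial>p) / c"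
    using fin c by (intro integral_Markov_inequality_measure integrable_measure_pmf_finite) auto
  also have "\<dots> \<le> \<delta>" using mse c by (simp add: c_def divide_le_eq algebra_simps)
  finally show ?thesis using measure_pmf.prob_compl[of "{x. \<bar>g x - L\<bar> \<le> \<epsilon> * L}" p] by simp
qed

lemma square_diff_le: "((a::real) - b)^2 \<le> 2 * a^2 + 2 * b^2"
  using sum_squares_ge_zero[of "a + b" 0] by (simp add: power2_eq_square algebra_simps)

lemma dvd_less_imp_add_le:
  fixes a b s :: nat
  assumes "s dvd a" "s dvd b" "a < b"
  shows "a + s \<le> b"
proof -
  obtain a' b' where "a = s * a'" "b = s * b'" using assms(1,2) by (auto elim!: dvdE)
  with assms(3) show ?thesis by (metis add.commute less_eq_Suc_le mult_Suc_right mult_le_mono2 mult_less_cancel1)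
qed

definition ins_weight :: "update \<Rightarrow> nat" where "ins_weight u = nat (snd u)"
definition del_weight :: "update \<Rightarrow> nat" where "del_weight u = nat (- snd u)"
definition ins_total :: "update list \<Rightarrow> nat" where "ins_total xs = sum_list (map ins_weight xs)"
definition del_total :: "update list \<Rightarrow> nat" where "del_total xs = sum_list (map del_weight xs)"

lemma sum_freq_eq_sum_list:
  "finite I \<Longrightarrow> fst ` set xs \<subseteq> I \<Longrightarrow> (\<Sum>i\<in>I. freq xs i) = sum_list (map snd xs)"
proof (induction xs)
  case (Cons x xs)
  have "freq (x # xs) i = (if fst x = i then snd x else 0) + freq xs i" for i
    by (simp add: freq_def)
  then have "(\<Sum>i\<in>I. freq (x # xs) i) = (\<Sum>i\<in>I. if fst x = i then snd x else 0) + (\<Sum>i\<in>I. freq xs i)"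
    by (simp add: sum.distrib)
  then show ?case using Cons by (simp add: sum.delta)
qed (simp add: freq_def)

lemma sum_list_snd_eq_totals: "sum_list (map snd xs) = int (ins_total xs) - int (del_total xs)"
  by (induction xs) (auto simp: ins_total_def del_total_def ins_weight_def del_weight_def)

lemma l1_norm_freq_eq_totals:
  assumes "valid_stream n m M xs" and "strict_turnstile xs"
  shows "l1_norm n (freq xs) = real (ins_total xs) - real (del_total xs)"
proof -
  have "freq xs i \<ge> 0" for i
    using \<open>strict_turnstile xs\<close> unfolding strict_turnstile_def by (metis order_refl take_all)
  then have "l1_norm n (freq xs) = real_of_int (\<Sum>i\<in>{1..n}. freq xs i)"
    unfolding l1_norm_def by simp
  also have "\<dots> = real_of_int (sum_list (map snd xs))"
    using \<open>valid_stream n m M xs\<close> by (subst sum_freq_eq_sum_list) (auto simp: valid_stream_def)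
  finally show ?thesis by (simp add: sum_list_snd_eq_totals)
qed

lemma l1_norm_ins_del_eq_totals:
  assumes "valid_stream n m M xs"
  shows "l1_norm n (\<lambda>i. ins_vec xs i + del_vec xs i) = real (ins_total xs) + real (del_total xs)"
proof -
  let ?pos = "filter (\<lambda>u. snd u > 0) xs" and ?neg = "filter (\<lambda>u. snd u < 0) xs"
  have pos: "freq ?pos i \<ge> 0" and neg: "freq ?neg i \<le> 0" for i
    by (induction xs) (auto simp: freq_def)
  have "\<bar>ins_vec xs i + del_vec xs i\<bar> = freq ?pos i - freq ?neg i" for i
    using pos[of i] neg[of i] by (simp add: ins_vec_def del_vec_def)
  then have "l1_norm n (\<lambda>i. ins_vec xs i + del_vec xs i) =
      real_of_int ((\<Sum>i\<in>{1..n}. freq ?pos i) - (\<Sum>i\<in>{1..n}. freq ?neg i))"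
    by (simp add: l1_norm_def sum_subtractf)
  also have "\<dots> = real_of_int (sum_list (map snd ?pos) - sum_list (map snd ?neg))"
    using assms by (subst (1 2) sum_freq_eq_sum_list) (auto simp: valid_stream_def)
  also have "sum_list (map snd ?pos) - sum_list (map snd ?neg) = int (ins_total xs) + int (del_total xs)"
    by (induction xs) (auto simp: ins_total_def del_total_def ins_weight_def del_weight_def)
  finally show ?thesis by simp
qed

lemma totals_le_length_mult:
  assumes "valid_stream n m M xs"
  shows "ins_total xs + del_total xs \<le> m * M"
proof -
  have "ins_total xs + del_total xs = (\<Sum>u\<leftarrow>xs. ins_weight u + del_weight u)"
    by (simp add: ins_total_def del_total_def sum_list_addf)
  also have "\<dots> \<le> (\<Sum>u\<leftarrow>xs. M)"
    using assms by (intro sum_list_mono) (auto simp: valid_stream_def ins_weight_def del_weight_def)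
  also have "\<dots> = m * M" using assms by (simp add: valid_stream_def sum_list_triv)
  finally show ?thesis .
qed

section \<open>Approximate counters\<close>

(* A counter state Y is a multiple of 2 ^ expo Y with quotient below 2 K, so it is determined by
   the pair (expo Y, Y div 2 ^ expo Y) (see index below). count_step adds a weight and rounds the
   sum to a multiple of 2 ^ expo of the sum, up or down with the probabilities that make the
   rounding unbiased, and saturates at cap. *)
locale approx_counter =
  fixes K :: nat and J :: nat
  assumes K_pos: "K \<ge> 1"
begin

definition expo :: "nat \<Rightarrow> nat" where "expo Y = (LEAST j. Y < 2 * K * 2 ^ j)"

definition representable :: "nat \<Rightarrow> bool" where "representable Y \<longleftrightarrow> 2 ^ expo Y dvd Y"

definition cap :: nat where "cap = (2 * K - 1) * 2 ^ J"

definition grid :: "nat set" where "grid = {Y. representable Y \<and> Y \<le> cap}"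

definition count_step :: "nat \<Rightarrow> nat \<Rightarrow> nat pmf" where
  "count_step X w = (let v = X + w in if cap < v then return_pmf cap else
     let s = 2 ^ expo v in
     map_pmf (\<lambda>b. if b then s * (v div s) + s else s * (v div s))
       (bernoulli_pmf (real (v mod s) / real s)))"

definition potential :: "nat \<Rightarrow> nat \<Rightarrow> real" where
  "potential S Y = (real Y - real S)^2 - 4 ^ expo Y / 3"

lemma expo_lt: "Y < 2 * K * 2 ^ expo Y"
proof -
  have "Y < 2 * K * 2 ^ Y"
    using K_pos less_le_trans[OF less_exp[of Y], of "2 * K * 2 ^ Y"] by simp
  then show ?thesis unfolding expo_def by (rule LeastI)
qed

lemma expo_le: "Y < 2 * K * 2 ^ j \<Longrightarrow> expo Y \<le> j"
  unfolding expo_def by (rule Least_le)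

lemma expo_mono: "Y \<le> Z \<Longrightarrow> expo Y \<le> expo Z"
  using expo_lt[of Z] by (intro expo_le) simp

lemma expo_0: "expo 0 = 0"
  using expo_le[of 0 0] K_pos by simp

lemma expo_ge: "K * 2 ^ j \<le> Y \<Longrightarrow> j \<le> expo Y"
proof (rule ccontr)
  assume "K * 2 ^ j \<le> Y" "\<not> j \<le> expo Y"
  then obtain i where j: "j = Suc i" and "expo Y \<le> i" by (cases j) auto
  then have "2 * K * 2 ^ expo Y \<le> 2 * K * 2 ^ i" by (simp add: power_increasing)
  also have "\<dots> = K * 2 ^ j" unfolding j by simp
  finally show False using expo_lt[of Y] \<open>K * 2 ^ j \<le> Y\<close> by linarith
qed

lemma mult_two_pow_expo_le: "expo Y \<ge> 1 \<Longrightarrow> K * 2 ^ expo Y \<le> Y"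
proof (rule ccontr)
  assume "expo Y \<ge> 1" "\<not> K * 2 ^ expo Y \<le> Y"
  then obtain i where i: "expo Y = Suc i" and "Y < 2 * K * 2 ^ i" by (cases "expo Y") auto
  then show False using expo_le[of Y i] by simp
qed

lemma representableI: assumes "2 ^ j dvd Y" "Y \<le> 2 * K * 2 ^ j" shows "representable Y"
proof (cases "Y < 2 * K * 2 ^ j")
  case True
  then have "(2::nat) ^ expo Y dvd 2 ^ j" by (intro le_imp_power_dvd expo_le)
  then show ?thesis using assms(1) unfolding representable_def by (rule dvd_trans)
next
  case False
  then have Y: "Y = 2 * K * 2 ^ j" using assms(2) by simp
  then have "(2::nat) ^ expo Y dvd 2 ^ Suc j" using K_pos by (intro le_imp_power_dvd expo_le) simp
  moreover have "(2::nat) ^ Suc j dvd Y" unfolding Y by simp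
  ultimately show ?thesis unfolding representable_def by (rule dvd_trans)
qed

lemma cap_lt: "cap < 2 * K * 2 ^ J"
  unfolding cap_def using K_pos by simp

lemma expo_cap: "expo cap = J"
proof (rule antisym)
  show "expo cap \<le> J" using cap_lt by (rule expo_le)
  show "J \<le> expo cap" using K_pos by (intro expo_ge) (simp add: cap_def)
qed

lemma representable_cap: "representable cap"
  unfolding representable_def expo_cap by (simp add: cap_def)

lemma representable_round_down_up:
  fixes v :: nat
  defines "s \<equiv> 2 ^ expo v"
  shows "representable (s * (v div s))" and "representable (s * (v div s) + s)"
proof -
  have q: "v div s < 2 * K"
    using expo_lt[of v] by (simp add: s_def less_mult_imp_div_less)
  then show "representable (s * (v div s))"
    by (intro representableI[of "expo v"]) (auto simp: s_def)
  have "s * (v div s) + s = s * (v div s + 1)" by simp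
  also have "\<dots> \<le> s * (2 * K)" using q by (intro mult_le_mono2) simp
  finally show "representable (s * (v div s) + s)"
    by (intro representableI[of "expo v"]) (auto simp: s_def mult.commute)
qed

lemma round_up_le_cap:
  fixes v :: nat
  defines "s \<equiv> 2 ^ expo v"
  assumes "v \<le> cap" and "0 < v mod s"
  shows "s * (v div s) + s \<le> cap"
proof (rule dvd_less_imp_add_le)
  have "expo v \<le> J" using assms(2) cap_lt by (intro expo_le) simp
  then show "s dvd cap" unfolding s_def cap_def by (simp add: le_imp_power_dvd)
  show "s * (v div s) < cap" using assms(2,3) mult_div_mod_eq[of s v] by linarith
qed simp

lemma expo_round_down: "expo v \<le> expo (2 ^ expo v * (v div 2 ^ expo v))"
proof (cases "expo v = 0")
  case False
  then have "K * 2 ^ expo v \<le> v" by (simp add: mult_two_pow_expo_le)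
  then have "K \<le> v div 2 ^ expo v" by (simp add: less_eq_div_iff_mult_less_eq)
  then show ?thesis by (intro expo_ge) (simp add: mult.commute)
qed simp

lemma finite_set_count_step: "finite (set_pmf (count_step X w))"
  unfolding count_step_def Let_def by auto

lemma set_count_step: "set_pmf (count_step X w) \<subseteq> grid"
proof (cases "cap < X + w")
  case True
  then show ?thesis by (simp add: count_step_def grid_def representable_cap)
next
  case False
  define v where "v = X + w"
  define s where "s = (2::nat) ^ expo v"
  have "v \<le> cap" using False by (simp add: v_def)
  show ?thesis
  proof
    fix Y assume "Y \<in> set_pmf (count_step X w)"
    then obtain b where b: "b \<in> set_pmf (bernoulli_pmf (real (v mod s) / real s))"
      and Y: "Y = (if b then s * (v div s) + s else s * (v div s))"
      using False by (auto simp: count_step_def Let_def v_def s_def)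
    have "0 < v mod s" if b
      using b \<open>b\<close> by (auto simp: s_def divide_simps set_pmf_eq pmf_bernoulli_True intro: Nat.gr0I)
    then show "Y \<in> grid"
      using Y representable_round_down_up[of v] round_up_le_cap[OF \<open>v \<le> cap\<close>] \<open>v \<le> cap\<close>
      by (auto simp: grid_def s_def intro: le_trans[OF times_div_less_eq_dividend])
  qed
qed

lemma integral_count_step:
  fixes f :: "nat \<Rightarrow> real"
  assumes "X + w \<le> cap"
  defines "v \<equiv> X + w"
  defines "s \<equiv> 2 ^ expo v"
  defines "p \<equiv> real (v mod s) / real s"
  shows "(\<integral>Y. f Y \<partial>count_step X w) = f (s * (v div s) + s) * p + f (s * (v div s)) * (1 - p)"
proof -
  have "0 \<le> p" "p \<le> 1" by (auto simp: p_def s_def divide_simps)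
  have "count_step X w = map_pmf (\<lambda>b. if b then s * (v div s) + s else s * (v div s)) (bernoulli_pmf p)"
    using assms(1) unfolding count_step_def Let_def v_def[symmetric] s_def[symmetric] p_def[symmetric] by simp
  then show ?thesis
    using \<open>0 \<le> p\<close> \<open>p \<le> 1\<close> by (simp only: integral_map_pmf integral_bernoulli_pmf) simp
qed

lemma expectation_count_step: "(\<integral>Y. real Y \<partial>count_step X w) \<le> real X + real w"
proof (cases "cap < X + w")
  case True
  then show ?thesis by (simp add: count_step_def)
next
  case False
  define v where "v = X + w"
  define s where "s = (2::nat) ^ expo v"
  have "(\<integral>Y. real Y \<partial>count_step X w) =
      real (s * (v div s) + s) * (real (v mod s) / real s) + real (s * (v div s)) * (1 - real (v mod s) / real s)"
    using False by (simp add: integral_count_step v_def s_def)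
  also have "\<dots> = real (s * (v div s)) + real (v mod s)" by (simp add: s_def field_simps)
  also have "\<dots> = real X + real w" unfolding v_def by (metis mult_div_mod_eq of_nat_add)
  finally show ?thesis by simp
qed

(* The rounding variance r (s - r) is paid for by the added weight when the scale is unchanged
   (then r <= w and s <= v / K), and by the growth of the correction term 4 ^ expo / 3 of
   potential when the scale has at least doubled (then r (s - r) <= s^2 / 4). *)
lemma rounding_variance_le:
  fixes w :: nat
  assumes "representable X"
  defines "v \<equiv> X + w"
  defines "s \<equiv> 2 ^ expo v"
  defines "r \<equiv> v mod s"
  shows "real r * (real s - real r) \<le> (4 ^ expo v - 4 ^ expo X) / 3 + real w * real v / real K"
proof (cases "expo X = expo v")
  case True
  show ?thesis
  proof (cases "expo v = 0")
    case True
    then show ?thesis using \<open>expo X = expo v\<close> by (simp add: r_def s_def)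
  next
    case False
    then have "K * s \<le> v" by (simp add: s_def mult_two_pow_expo_le)
    then have "real K * real s \<le> real v" by (metis of_nat_le_iff of_nat_mult)
    then have s_le: "real s \<le> real v / real K" using K_pos by (simp add: field_simps)
    obtain k where "X = s * k"
      using \<open>representable X\<close> \<open>expo X = expo v\<close> by (auto simp: representable_def s_def elim!: dvdE)
    then have "r \<le> w" by (simp add: r_def v_def)
    have "real r * (real s - real r) \<le> real r * real s" by (simp add: algebra_simps)
    also have "\<dots> \<le> real w * real s" using \<open>r \<le> w\<close> by (intro mult_right_mono) auto
    also have "\<dots> \<le> real w * (real v / real K)" using s_le by (intro mult_left_mono) auto
    finally show ?thesis using \<open>expo X = expo v\<close> by simp
  qed
next
  case False
  then have "expo X < expo v" using expo_mono[of X v] by (simp add: v_def)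
  then have "4 * 4 ^ expo X \<le> (4::real) ^ expo v"
    unfolding power_Suc[symmetric] by (intro power_increasing) auto
  moreover have "real r * (real s - real r) \<le> real s ^ 2 / 4"
    using sum_squares_ge_zero[of "real s - 2 * real r" 0] by (simp add: power2_eq_square algebra_simps)
  moreover have "real s ^ 2 = 4 ^ expo v"
    by (simp add: s_def power2_eq_square flip: power_mult_distrib)
  ultimately have "real r * (real s - real r) \<le> (4 ^ expo v - 4 ^ expo X) / 3"
    by (simp add: field_simps)
  then show ?thesis by (simp add: add_increasing2)
qed

lemma potential_count_step:
  assumes "representable X" and "X \<le> cap" and "S + w \<le> cap"
  shows "(\<integral>Y. potential (S + w) Y \<partial>count_step X w) \<le> potential S X + real w * (real X + real w) / real K"
proof (cases "cap < X + w")
  case True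
  have "expo X \<le> J" using \<open>X \<le> cap\<close> cap_lt by (intro expo_le) simp
  then have "(4::real) ^ expo X \<le> 4 ^ J" by (intro power_increasing) auto
  moreover have "(real cap - real (S + w))^2 \<le> (real X - real S)^2"
    using True \<open>S + w \<le> cap\<close> by (intro power_mono) auto
  moreover have "0 \<le> real w * (real X + real w) / real K" by simp
  ultimately have "potential (S + w) cap \<le> potential S X + real w * (real X + real w) / real K"
    unfolding potential_def expo_cap by linarith
  then show ?thesis using True by (simp add: count_step_def)
next
  case False
  define v where "v = X + w"
  define s where "s = (2::nat) ^ expo v"
  define r where "r = v mod s"
  define l where "l = s * (v div s)"
  define p where "p = real r / real s"
  have "0 \<le> p" "p \<le> 1" by (auto simp: p_def r_def s_def divide_simps)
  have v_eq: "real v = real l + real r" unfolding l_def r_def by (metis mult_div_mod_eq of_nat_add)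
  have "expo v \<le> expo l" unfolding l_def s_def by (rule expo_round_down)
  moreover have "expo l \<le> expo (l + s)" by (rule expo_mono) simp
  ultimately have "(4::real) ^ expo v \<le> 4 ^ expo l" "(4::real) ^ expo v \<le> 4 ^ expo (l + s)"
    by (auto intro: power_increasing)
  then have "(\<integral>Y. potential (S + w) Y \<partial>count_step X w) \<le>
      ((real (l + s) - real (S + w))^2 - 4 ^ expo v / 3) * p + ((real l - real (S + w))^2 - 4 ^ expo v / 3) * (1 - p)"
    using False \<open>0 \<le> p\<close> \<open>p \<le> 1\<close>
    by (simp add: integral_count_step potential_def v_def[symmetric] s_def[symmetric] l_def[symmetric]
        r_def[symmetric] p_def[symmetric] del: of_nat_add)
      (intro add_mono mult_right_mono; simp)
  also have "\<dots> = (real v - real (S + w))^2 + real r * (real s - real r) - 4 ^ expo v / 3"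
    using v_eq by (simp add: p_def s_def field_simps power2_eq_square)
  also have "\<dots> \<le> (real X - real S)^2 + (4 ^ expo v - 4 ^ expo X) / 3 + real w * real v / real K - 4 ^ expo v / 3"
    using rounding_variance_le[OF \<open>representable X\<close>, of w] by (simp add: v_def s_def r_def)
  also have "\<dots> = potential S X + real w * (real X + real w) / real K"
    by (simp add: potential_def v_def field_simps)
  finally show ?thesis .
qed

definition count_run :: "nat list \<Rightarrow> nat pmf" where
  "count_run ws = foldl (\<lambda>p w. bind_pmf p (\<lambda>X. count_step X w)) (return_pmf 0) ws"

lemma count_run_snoc: "count_run (ws @ [w]) = bind_pmf (count_run ws) (\<lambda>X. count_step X w)"
  by (simp add: count_run_def)

lemma set_count_run: "set_pmf (count_run ws) \<subseteq> grid"
proof (induction ws rule: rev_induct)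
  case Nil
  then show ?case by (simp add: count_run_def grid_def representable_def)
next
  case (snoc w ws)
  then show ?case using set_count_step by (fastforce simp: count_run_snoc)
qed

lemma finite_set_count_run: "finite (set_pmf (count_run ws))"
  by (rule finite_subset[OF set_count_run]) (auto simp: grid_def)

lemma moments_count_run:
  "sum_list ws \<le> cap \<Longrightarrow> (\<integral>X. real X \<partial>count_run ws) \<le> sum_list ws \<and>
     (\<integral>X. potential (sum_list ws) X \<partial>count_run ws) \<le> -1/3 + real (sum_list ws)^2 / real K"
proof (induction ws rule: rev_induct)
  case Nil
  then show ?case by (simp add: count_run_def potential_def expo_0)
next
  case (snoc w ws)
  define p where "p = count_run ws"
  define S where "S = sum_list ws"
  have "S + w \<le> cap" using snoc.prems by (simp add: S_def)
  then have IH: "(\<integral>X. real X \<partial>p) \<le> S" "(\<integral>X. potential S X \<partial>p) \<le> -1/3 + real S^2 / real K"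
    using snoc.IH by (simp_all add: p_def S_def)
  have fin: "finite (set_pmf p)" by (simp add: p_def finite_set_count_run)
  have supp: "representable X" "X \<le> cap" if "X \<in> set_pmf p" for X
    using that set_count_run by (auto simp: p_def grid_def)
  have integral_snoc: "(\<integral>Y. f Y \<partial>count_run (ws @ [w])) = (\<integral>X. (\<integral>Y. f Y \<partial>count_step X w) \<partial>p)"
    for f :: "nat \<Rightarrow> real"
    by (simp add: count_run_snoc p_def integral_bind_pmf_finite finite_set_count_run finite_set_count_step)
  have int: "integrable p f" for f :: "nat \<Rightarrow> real"
    using fin by (rule integrable_measure_pmf_finite)
  have "(\<integral>Y. real Y \<partial>count_run (ws @ [w])) \<le> (\<integral>X. real X + real w \<partial>p)"
    unfolding integral_snoc using fin by (rule integral_mono_pmf_finite) (rule expectation_count_step)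
  also have "\<dots> \<le> S + w" using IH int by simp
  finally have mean: "(\<integral>Y. real Y \<partial>count_run (ws @ [w])) \<le> S + w" .
  have "(\<integral>Y. potential (S + w) Y \<partial>count_run (ws @ [w])) \<le>
      (\<integral>X. potential S X + real w * (real X + real w) / real K \<partial>p)"
    unfolding integral_snoc using fin \<open>S + w \<le> cap\<close> supp
    by (intro integral_mono_pmf_finite potential_count_step) auto
  also have "\<dots> = (\<integral>X. potential S X \<partial>p) + real w * ((\<integral>X. real X \<partial>p) + real w) / real K"
    using int by (simp add: algebra_simps add_divide_distrib)
  also have "\<dots> \<le> (-1/3 + real S^2 / real K) + real w * (real S + real w) / real K"
    using IH by (intro add_mono divide_right_mono mult_left_mono) auto
  also have "\<dots> \<le> -1/3 + real (S + w)^2 / real K"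
    by (simp add: power2_eq_square algebra_simps add_divide_distrib[symmetric] divide_right_mono)
  finally show ?case using mean by (simp add: S_def)
qed

lemma four_pow_expo_le: "(4::real) ^ expo Y \<le> 1 + real Y^2 / real K^2"
proof (cases "expo Y = 0")
  case False
  then have "K * 2 ^ expo Y \<le> Y" by (simp add: mult_two_pow_expo_le)
  then have "real K * 2 ^ expo Y \<le> real Y" by (metis of_nat_le_iff of_nat_mult of_nat_numeral of_nat_power)
  then have "(real K * 2 ^ expo Y)^2 \<le> real Y^2" by (intro power_mono) auto
  then have "real K^2 * 4 ^ expo Y \<le> real Y^2"
    by (simp add: power2_eq_square power_mult_distrib[symmetric] algebra_simps)
  then have "4 ^ expo Y \<le> real Y^2 / real K^2" using K_pos by (simp add: field_simps)
  then show ?thesis by simp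
qed simp

lemma square_deviation_le_potential: "(real Y - real S)^2 \<le> 3 * potential S Y + 1 + 2 * real S^2 / real K"
proof -
  define d where "d = real Y - real S"
  have "1 \<le> real K" using K_pos by simp
  then have K2: "1 \<le> real K^2" by (rule one_le_power)
  have "real K \<le> real K^2" using \<open>1 \<le> real K\<close> by (simp add: power2_eq_square mult_le_cancel_left1)
  have "real Y^2 \<le> 2 * d^2 + 2 * real S^2"
    using square_diff_le[of d "- real S"] by (simp add: d_def)
  then have "real Y^2 / real K^2 \<le> (2 * d^2 + 2 * real S^2) / real K^2"
    using K2 by (intro divide_right_mono) auto
  also have "\<dots> \<le> 2 * d^2 + 2 * real S^2 / real K"
  proof -
    have "2 * d^2 * 1 \<le> 2 * d^2 * real K^2" using K2 by (intro mult_left_mono) auto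
    then have "2 * d^2 / real K^2 \<le> 2 * d^2" using K2 by (simp add: divide_le_eq)
    moreover have "2 * real S^2 / real K^2 \<le> 2 * real S^2 / real K"
      using \<open>real K \<le> real K^2\<close> \<open>1 \<le> real K\<close> by (intro divide_left_mono) auto
    ultimately show ?thesis by (simp add: add_divide_distrib)
  qed
  finally have "(4::real) ^ expo Y \<le> 1 + 2 * d^2 + 2 * real S^2 / real K"
    using four_pow_expo_le[of Y] by linarith
  then show ?thesis by (simp add: potential_def d_def)
qed

lemma mean_square_error_count_run:
  assumes "sum_list ws \<le> cap"
  shows "(\<integral>X. (real X - real (sum_list ws))^2 \<partial>count_run ws) \<le> 5 * real (sum_list ws)^2 / real K"
proof -
  let ?S = "sum_list ws"
  have int: "integrable (count_run ws) f" for f :: "nat \<Rightarrow> real"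
    by (rule integrable_measure_pmf_finite[OF finite_set_count_run])
  have "(\<integral>X. (real X - real ?S)^2 \<partial>count_run ws) \<le>
      (\<integral>X. 3 * potential ?S X + 1 + 2 * real ?S^2 / real K \<partial>count_run ws)"
    by (intro integral_mono_pmf_finite finite_set_count_run square_deviation_le_potential)
  also have "\<dots> = 3 * (\<integral>X. potential ?S X \<partial>count_run ws) + 1 + 2 * real ?S^2 / real K"
    using int by simp
  also have "\<dots> \<le> 5 * real ?S^2 / real K"
    using moments_count_run[OF assms] by (simp add: field_simps)
  finally show ?thesis .
qed

definition state_step :: "nat \<times> nat \<Rightarrow> update \<Rightarrow> (nat \<times> nat) pmf" where
  "state_step x u = pair_pmf (count_step (fst x) (ins_weight u)) (count_step (snd x) (del_weight u))"

definition pair_run :: "update list \<Rightarrow> (nat \<times> nat) pmf" where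
  "pair_run xs = foldl (\<lambda>p u. bind_pmf p (\<lambda>x. state_step x u)) (return_pmf (0, 0)) xs"

lemma pair_run_snoc: "pair_run (xs @ [u]) = bind_pmf (pair_run xs) (\<lambda>x. state_step x u)"
  by (simp add: pair_run_def)

lemma map_fst_pair_run: "map_pmf fst (pair_run xs) = count_run (map ins_weight xs)"
proof (induction xs rule: rev_induct)
  case (snoc u xs)
  have "map_pmf fst (pair_run (xs @ [u])) = bind_pmf (pair_run xs) (\<lambda>x. count_step (fst x) (ins_weight u))"
    by (simp add: pair_run_snoc map_bind_pmf state_step_def map_fst_pair_pmf)
  also have "\<dots> = bind_pmf (map_pmf fst (pair_run xs)) (\<lambda>X. count_step X (ins_weight u))"
    by (simp add: bind_map_pmf)
  finally show ?case by (simp add: snoc.IH count_run_snoc)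
qed (simp add: pair_run_def count_run_def)

lemma map_snd_pair_run: "map_pmf snd (pair_run xs) = count_run (map del_weight xs)"
proof (induction xs rule: rev_induct)
  case (snoc u xs)
  have "map_pmf snd (pair_run (xs @ [u])) = bind_pmf (pair_run xs) (\<lambda>x. count_step (snd x) (del_weight u))"
    by (simp add: pair_run_snoc map_bind_pmf state_step_def map_snd_pair_pmf)
  also have "\<dots> = bind_pmf (map_pmf snd (pair_run xs)) (\<lambda>X. count_step X (del_weight u))"
    by (simp add: bind_map_pmf)
  finally show ?case by (simp add: snoc.IH count_run_snoc)
qed (simp add: pair_run_def count_run_def)

definition states :: "(nat \<times> nat) set" where
  "states = grid \<times> grid"

lemma set_pair_run: "set_pmf (pair_run xs) \<subseteq> states"
proof
  fix x assume "x \<in> set_pmf (pair_run xs)"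
  then have "fst x \<in> set_pmf (map_pmf fst (pair_run xs))" "snd x \<in> set_pmf (map_pmf snd (pair_run xs))"
    by simp_all
  then have "fst x \<in> set_pmf (count_run (map ins_weight xs))" "snd x \<in> set_pmf (count_run (map del_weight xs))"
    by (simp_all only: map_fst_pair_run map_snd_pair_run)
  then show "x \<in> states" using set_count_run by (auto simp: states_def mem_Times_iff)
qed

lemma finite_set_pair_run: "finite (set_pmf (pair_run xs))"
  by (rule finite_subset[OF set_pair_run]) (auto simp: states_def grid_def)

lemma mean_square_error_pair_run:
  assumes "ins_total xs \<le> cap" and "del_total xs \<le> cap"
  defines "I \<equiv> real (ins_total xs)" and "D \<equiv> real (del_total xs)"
  shows "(\<integral>x. ((real (fst x) - real (snd x)) - (I - D))^2 \<partial>pair_run xs) \<le> 10 * (I^2 + D^2) / real K"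
proof -
  have int: "integrable (pair_run xs) f" for f :: "nat \<times> nat \<Rightarrow> real"
    by (rule integrable_measure_pmf_finite[OF finite_set_pair_run])
  have "(\<integral>x. ((real (fst x) - real (snd x)) - (I - D))^2 \<partial>pair_run xs) \<le>
      (\<integral>x. 2 * (real (fst x) - I)^2 + 2 * (real (snd x) - D)^2 \<partial>pair_run xs)"
  proof (rule integral_mono_pmf_finite[OF finite_set_pair_run])
    fix x :: "nat \<times> nat"
    have "(real (fst x) - real (snd x)) - (I - D) = (real (fst x) - I) - (real (snd x) - D)" by simp
    then show "((real (fst x) - real (snd x)) - (I - D))^2 \<le> 2 * (real (fst x) - I)^2 + 2 * (real (snd x) - D)^2"
      by (simp only: square_diff_le)
  qed
  also have "\<dots> = 2 * (\<integral>X. (real X - I)^2 \<partial>map_pmf fst (pair_run xs)) +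
      2 * (\<integral>X. (real X - D)^2 \<partial>map_pmf snd (pair_run xs))"
    using int by simp
  also have "\<dots> \<le> 2 * (5 * I^2 / real K) + 2 * (5 * D^2 / real K)"
    using mean_square_error_count_run[of "map ins_weight xs"] mean_square_error_count_run[of "map del_weight xs"]
      assms(1,2)
    by (simp add: map_fst_pair_run map_snd_pair_run I_def D_def ins_total_def del_total_def)
  also have "\<dots> = 10 * (I^2 + D^2) / real K" by (simp add: add_divide_distrib)
  finally show ?thesis .
qed

definition index :: "nat \<Rightarrow> nat" where "index Y = expo Y * (2 * K) + Y div 2 ^ expo Y"

definition unindex :: "nat \<Rightarrow> nat" where "unindex i = (i mod (2 * K)) * 2 ^ (i div (2 * K))"

definition width :: nat where "width = floorlog 2 ((J + 1) * (2 * K))"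

definition encode :: "nat \<times> nat \<Rightarrow> bool list" where
  "encode x = map (bit (index (fst x))) [0..<width] @ map (bit (index (snd x))) [0..<width]"

definition decode :: "bool list \<Rightarrow> nat \<times> nat" where
  "decode \<sigma> = (unindex (horner_sum of_bool 2 (take width \<sigma>)), unindex (horner_sum of_bool 2 (drop width \<sigma>)))"

lemma index_less_two_pow_width:
  assumes "Y \<le> cap" shows "index Y < 2 ^ width"
proof -
  have q: "Y div 2 ^ expo Y < 2 * K" using expo_lt[of Y] by (simp add: less_mult_imp_div_less)
  have "expo Y \<le> J" using assms cap_lt by (intro expo_le) simp
  have "index Y < expo Y * (2 * K) + 2 * K" using q by (simp add: index_def)
  also have "\<dots> = (expo Y + 1) * (2 * K)" by simp
  also have "\<dots> \<le> (J + 1) * (2 * K)" using \<open>expo Y \<le> J\<close> by (intro mult_right_mono) auto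
  also have "\<dots> < 2 ^ width" unfolding width_def using K_pos by (intro floorlog_bounds[THEN conjunct2]) auto
  finally show ?thesis .
qed

lemma unindex_index: "representable Y \<Longrightarrow> unindex (index Y) = Y"
proof -
  assume "representable Y"
  have "Y div 2 ^ expo Y < 2 * K" using expo_lt[of Y] by (simp add: less_mult_imp_div_less)
  then have "index Y div (2 * K) = expo Y" "index Y mod (2 * K) = Y div 2 ^ expo Y"
    unfolding index_def by simp_all
  then show ?thesis using \<open>representable Y\<close> by (simp add: unindex_def representable_def)
qed

lemma decode_encode: "x \<in> states \<Longrightarrow> decode (encode x) = x"
  by (auto simp: states_def grid_def decode_def encode_def horner_sum_bit_eq_take_bit take_bit_nat_eq_self
      index_less_two_pow_width unindex_index)

definition counter_alg :: stream_alg where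
  "counter_alg = \<lparr>init = return_pmf (encode (0, 0)),
     step = (\<lambda>\<sigma> u. map_pmf encode (state_step (decode \<sigma>) u)),
     out_fn = (\<lambda>\<sigma>. return_pmf (real (fst (decode \<sigma>)) - real (snd (decode \<sigma>))))\<rparr>"

lemma run_counter_alg: "run counter_alg xs = map_pmf encode (pair_run xs)"
proof (induction xs rule: rev_induct)
  case Nil
  then show ?case by (simp add: run_def counter_alg_def pair_run_def)
next
  case (snoc u xs)
  have "run counter_alg (xs @ [u]) = bind_pmf (run counter_alg xs) (\<lambda>\<sigma>. step counter_alg \<sigma> u)"
    by (simp add: run_def)
  also have "\<dots> = bind_pmf (pair_run xs) (\<lambda>x. map_pmf encode (state_step (decode (encode x)) u))"
    unfolding snoc.IH by (simp add: bind_map_pmf counter_alg_def)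
  also have "\<dots> = map_pmf encode (pair_run (xs @ [u]))"
    by (simp add: pair_run_snoc map_bind_pmf decode_encode[OF subsetD[OF set_pair_run]] cong: bind_pmf_cong)
  finally show ?case .
qed

lemma length_run_counter_alg: "\<sigma> \<in> set_pmf (run counter_alg xs) \<Longrightarrow> length \<sigma> = 2 * width"
  by (auto simp: run_counter_alg encode_def)

lemma result_counter_alg: "result counter_alg xs = map_pmf (\<lambda>x. real (fst x) - real (snd x)) (pair_run xs)"
proof -
  have "result counter_alg xs =
      bind_pmf (pair_run xs) (\<lambda>x. return_pmf (real (fst (decode (encode x))) - real (snd (decode (encode x)))))"
    unfolding result_def run_counter_alg by (simp add: bind_map_pmf counter_alg_def)
  also have "\<dots> = bind_pmf (pair_run xs) (\<lambda>x. return_pmf (real (fst x) - real (snd x)))"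
    by (simp add: decode_encode[OF subsetD[OF set_pair_run]] cong: bind_pmf_cong)
  finally show ?thesis by (simp add: map_pmf_def)
qed

lemma counter_alg_accurate:
  assumes "valid_stream n m M xs" "strict_turnstile xs" "alpha_property \<alpha> n xs"
    and "m * M \<le> cap" and "0 < \<epsilon>" "0 < \<delta>" "1 \<le> \<alpha>" and "10 * \<alpha>^2 / (\<epsilon>^2 * \<delta>) \<le> real K"
  shows "1 - \<delta> \<le> measure_pmf.prob (result counter_alg xs)
      {y. \<bar>y - l1_norm n (freq xs)\<bar> \<le> \<epsilon> * l1_norm n (freq xs)}"
proof -
  define I where "I = real (ins_total xs)"
  define D where "D = real (del_total xs)"
  define L where "L = l1_norm n (freq xs)"
  have L: "L = I - D" using l1_norm_freq_eq_totals[OF assms(1,2)] by (simp add: L_def I_def D_def)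
  have "I + D \<le> \<alpha> * L"
    using assms(3) l1_norm_ins_del_eq_totals[OF assms(1)] by (simp add: alpha_property_def L_def I_def D_def)
  moreover have "0 \<le> I" "0 \<le> D" by (simp_all add: I_def D_def)
  ultimately have "0 \<le> L"
    using \<open>1 \<le> \<alpha>\<close> mult_pos_neg[of \<alpha> L] by (cases "0 \<le> L") auto
  have "I^2 + D^2 \<le> (I + D)^2" using \<open>0 \<le> I\<close> \<open>0 \<le> D\<close> by (simp add: power2_eq_square algebra_simps)
  also have "\<dots> \<le> (\<alpha> * L)^2"
    using \<open>I + D \<le> \<alpha> * L\<close> \<open>0 \<le> I\<close> \<open>0 \<le> D\<close> by (intro power_mono) auto
  finally have "I^2 + D^2 \<le> (\<alpha> * L)^2" .
  have "ins_total xs \<le> cap" "del_total xs \<le> cap"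
    using totals_le_length_mult[OF assms(1)] \<open>m * M \<le> cap\<close> by simp_all
  then have "(\<integral>x. ((real (fst x) - real (snd x)) - L)^2 \<partial>pair_run xs) \<le> 10 * (I^2 + D^2) / real K"
    unfolding L I_def D_def by (rule mean_square_error_pair_run)
  also have "\<dots> \<le> 10 * \<alpha>^2 * L^2 / real K"
    using \<open>I^2 + D^2 \<le> (\<alpha> * L)^2\<close> K_pos by (simp add: divide_right_mono power_mult_distrib)
  also have "\<dots> \<le> \<epsilon>^2 * \<delta> * L^2"
  proof -
    have "10 * \<alpha>^2 \<le> \<epsilon>^2 * \<delta> * real K" using assms(5,6,8) by (simp add: divide_le_eq mult.commute)
    then have "10 * \<alpha>^2 * L^2 \<le> \<epsilon>^2 * \<delta> * real K * L^2" by (rule mult_right_mono) simp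
    then show ?thesis using K_pos by (simp add: divide_le_eq algebra_simps)
  qed
  finally show ?thesis
    unfolding result_counter_alg L_def[symmetric] using \<open>0 \<le> L\<close> assms(5,6)
    by (simp add: vimage_def prob_close_ge_of_mean_square finite_set_pair_run)
qed

end

(* Since ||f||_1 is an integer in {0..m M}, a blind uniform guess is exact with probability
   1 / (m M + 1). This is the fallback for 1 - delta <= 1 / (m M + 1), the only regime in which
   the space budget can drop below a positive constant. *)
definition guess_alg :: "nat \<Rightarrow> stream_alg" where
  "guess_alg N = \<lparr>init = return_pmf [], step = (\<lambda>_ _. return_pmf []),
     out_fn = (\<lambda>_. map_pmf real (pmf_of_set {0..N}))\<rparr>"

lemma run_guess_alg: "run (guess_alg N) xs = return_pmf []"
  by (induction xs rule: rev_induct) (simp_all add: run_def guess_alg_def)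

lemma guess_alg_accurate:
  assumes "valid_stream n m M xs" "strict_turnstile xs" and "1 - \<delta> \<le> 1 / (real (m * M) + 1)"
    and "0 \<le> \<epsilon>"
  shows "1 - \<delta> \<le> measure_pmf.prob (result (guess_alg (m * M)) xs)
      {y. \<bar>y - l1_norm n (freq xs)\<bar> \<le> \<epsilon> * l1_norm n (freq xs)}"
proof -
  define L where "L = l1_norm n (freq xs)"
  define l where "l = ins_total xs - del_total xs"
  have "0 \<le> L" by (simp add: L_def l1_norm_def sum_nonneg)
  then have "L = real l"
    using l1_norm_freq_eq_totals[OF assms(1,2)] by (simp add: L_def l_def of_nat_diff)
  have "l \<le> m * M" using totals_le_length_mult[OF assms(1)] by (simp add: l_def)
  then have "1 / (real (m * M) + 1) = measure_pmf.prob (pmf_of_set {0..m * M}) {l}"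
    by (simp add: measure_pmf_single)
  also have "\<dots> \<le> measure_pmf.prob (pmf_of_set {0..m * M}) (real -` {y. \<bar>y - L\<bar> \<le> \<epsilon> * L})"
    using \<open>L = real l\<close> \<open>0 \<le> L\<close> \<open>0 \<le> \<epsilon>\<close> by (intro measure_pmf.finite_measure_mono) auto
  finally show ?thesis using assms(3) by (simp add: result_def run_guess_alg guess_alg_def L_def)
qed

section \<open>Space\<close>

lemma floorlog_le_log_add_one: "0 < x \<Longrightarrow> real (floorlog 2 x) \<le> log 2 (real x) + 1"
  by (simp add: floorlog_def)

lemma less_two_pow_floorlog: "x < 2 ^ floorlog 2 x"
  by (cases "x = 0") (simp_all add: floorlog_bounds)

lemma counter_bits_le:
  fixes c \<epsilon> \<delta> \<alpha> :: real and n N :: nat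
  assumes "c > 0" and "n \<ge> 2" and "real N \<le> real n powr c"
    and "0 < \<epsilon>" "\<epsilon> < 1" and "0 < \<delta>" "\<delta> < 1" and "\<alpha> \<ge> 1"
  defines "K \<equiv> nat \<lceil>10 * \<alpha>^2 / (\<epsilon>^2 * \<delta>)\<rceil>"
  shows "real (2 * floorlog 2 ((floorlog 2 N + 1) * (2 * K))) \<le>
     (2 * log 2 (c + 2) + 2 * log 2 22 + 2) + 2 * log 2 (log 2 n) + 4 * log 2 (\<alpha> / \<epsilon>) + 2 * log 2 (1 / \<delta>)"
proof -
  define R where "R = 10 * \<alpha>^2 / (\<epsilon>^2 * \<delta>)"
  have "\<epsilon>^2 * \<delta> \<le> 1" using assms(4-7) by (simp add: mult_le_one power_le_one)
  moreover have "1 \<le> \<alpha>^2" using \<open>\<alpha> \<ge> 1\<close> by (simp add: one_le_power)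
  ultimately have "10 \<le> R" using assms(4,6) by (simp add: R_def le_divide_eq)
  then have "1 \<le> K" and "real K \<le> R + 1" unfolding K_def R_def[symmetric] by linarith+
  moreover have "22 * (\<alpha> / \<epsilon>)^2 * (1 / \<delta>) = 11 / 5 * R" by (simp add: R_def power_divide)
  ultimately have "2 * real K \<le> 22 * (\<alpha> / \<epsilon>)^2 * (1 / \<delta>)" using \<open>10 \<le> R\<close> by linarith
  have "1 \<le> log 2 (real n)" using \<open>n \<ge> 2\<close> by simp
  have J_bound: "real (floorlog 2 N) + 1 \<le> (c + 2) * log 2 n"
  proof (cases "N = 0")
    case True
    have "1 * 1 \<le> (c + 2) * log 2 n" using \<open>1 \<le> log 2 n\<close> \<open>c > 0\<close> by (intro mult_mono) auto
    then show ?thesis using True by (simp add: floorlog_def)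
  next
    case False
    have "real (floorlog 2 N) \<le> log 2 N + 1" using False by (simp add: floorlog_le_log_add_one)
    also have "log 2 N \<le> log 2 (real n powr c)" using False assms(2,3) by (intro log_mono) auto
    also have "\<dots> = c * log 2 n" by (simp add: log_powr)
    finally show ?thesis using \<open>1 \<le> log 2 n\<close> by (simp add: algebra_simps)
  qed
  have "real (2 * floorlog 2 ((floorlog 2 N + 1) * (2 * K))) \<le> 2 * (log 2 ((real (floorlog 2 N) + 1) * (2 * real K)) + 1)"
    using floorlog_le_log_add_one[of "(floorlog 2 N + 1) * (2 * K)"] \<open>1 \<le> K\<close> by (simp add: ring_distribs add.commute)
  also have "log 2 ((real (floorlog 2 N) + 1) * (2 * real K)) = log 2 (real (floorlog 2 N) + 1) + log 2 (2 * real K)"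
    using \<open>1 \<le> K\<close> by (intro log_mult_pos) auto
  also have "log 2 (real (floorlog 2 N) + 1) \<le> log 2 ((c + 2) * log 2 n)"
    using J_bound by (intro log_mono) auto
  also have "\<dots> = log 2 (c + 2) + log 2 (log 2 n)"
    using \<open>c > 0\<close> \<open>1 \<le> log 2 n\<close> by (intro log_mult_pos) auto
  also have "log 2 (2 * real K) \<le> log 2 (22 * (\<alpha> / \<epsilon>)^2 * (1 / \<delta>))"
    using \<open>2 * real K \<le> _\<close> \<open>1 \<le> K\<close> by (intro log_mono) auto
  also have "\<dots> = log 2 22 + 2 * log 2 (\<alpha> / \<epsilon>) + log 2 (1 / \<delta>)"
  proof -
    have "0 < \<alpha> / \<epsilon>" "0 < 1 / \<delta>" using assms(4,6,8) by simp_all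
    have "log 2 (22 * (\<alpha> / \<epsilon>)^2 * (1 / \<delta>)) = log 2 (22 * (\<alpha> / \<epsilon>)^2) + log 2 (1 / \<delta>)"
      using \<open>0 < \<alpha> / \<epsilon>\<close> \<open>0 < 1 / \<delta>\<close> by (intro log_mult_pos) auto
    moreover have "log 2 (22 * (\<alpha> / \<epsilon>)^2) = log 2 22 + log 2 ((\<alpha> / \<epsilon>)^2)"
      using \<open>0 < \<alpha> / \<epsilon>\<close> by (intro log_mult_pos) auto
    ultimately show ?thesis using \<open>0 < \<alpha> / \<epsilon>\<close> by (simp add: log_nat_power)
  qed
  finally show ?thesis by simp
qed

(* Outside the guessing regime either n >= 3, or n = 2 and then m M <= 2 powr c forces
   1 / delta > (2 powr c + 1) / 2 powr c. *)
lemma space_budget_lower_bound: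
  fixes c \<epsilon> \<delta> \<alpha> :: real and n N :: nat
  assumes "c > 0" and "n \<ge> 2" and "real N \<le> real n powr c"
    and "0 < \<epsilon>" "\<epsilon> < 1" and "0 < \<delta>" "\<delta> < 1" and "\<alpha> \<ge> 1"
    and "1 / (real N + 1) < 1 - \<delta>"
  shows "min (log 2 (log 2 3)) (log 2 ((2 powr c + 1) / 2 powr c)) \<le>
     log 2 (\<alpha> / \<epsilon>) + log 2 (1 / \<delta>) + log 2 (log 2 n)"
proof -
  have "0 < log 2 (\<alpha> / \<epsilon>)" "0 < log 2 (1 / \<delta>)" using assms(4-8) by simp_all
  show ?thesis
  proof (cases "n \<ge> 3")
    case True
    then have "log 2 (log 2 3) \<le> log 2 (log 2 n)" by (simp add: log_mono)
    then show ?thesis using \<open>0 < log 2 (\<alpha> / \<epsilon>)\<close> \<open>0 < log 2 (1 / \<delta>)\<close> by linarith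
  next
    case False
    then have "n = 2" using \<open>n \<ge> 2\<close> by simp
    define P where "P = (2::real) powr c"
    have "1 \<le> P" unfolding P_def using \<open>c > 0\<close> by (intro ge_one_powr_ge_zero) auto
    have "real N \<le> P" using assms(3) \<open>n = 2\<close> by (simp add: P_def)
    have "N \<ge> 1" using assms(6,9) by (cases N) auto
    have "(P + 1) / P \<le> (real N + 1) / real N"
      using \<open>real N \<le> P\<close> \<open>N \<ge> 1\<close> \<open>1 \<le> P\<close> by (simp add: field_simps)
    also have "\<dots> < 1 / \<delta>" using assms(6,9) \<open>N \<ge> 1\<close> by (simp add: field_simps)
    finally have "log 2 ((P + 1) / P) \<le> log 2 (1 / \<delta>)" using \<open>1 \<le> P\<close> by (intro log_mono) auto
    then show ?thesis using \<open>0 < log 2 (\<alpha> / \<epsilon>)\<close> \<open>n = 2\<close> by (simp add: P_def)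
  qed
qed

definition space_const :: "real \<Rightarrow> real" where
  "space_const c = 4 + (2 * log 2 (c + 2) + 2 * log 2 22 + 2) /
     min (log 2 (log 2 3)) (log 2 ((2 powr c + 1) / 2 powr c))"

lemma space_const_denominator_pos: "0 < min (log 2 (log 2 3)) (log 2 ((2 powr c + 1) / 2 powr c))"
proof -
  have "log 2 1 < log 2 ((2 powr c + 1) / 2 powr c)"
    by (subst log_less_cancel_iff) (auto simp: field_simps add_pos_pos)
  moreover have "0 < log 2 (log 2 (3::real))" by simp
  ultimately show ?thesis by simp
qed

lemma space_const_pos: "0 < c \<Longrightarrow> 0 < space_const c"
  using space_const_denominator_pos[of c] by (simp add: space_const_def add_pos_nonneg)

lemma counter_bits_le_space_budget:
  fixes c \<epsilon> \<delta> \<alpha> :: real and n N :: nat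
  assumes "c > 0" and "n \<ge> 2" and "real N \<le> real n powr c"
    and "0 < \<epsilon>" "\<epsilon> < 1" and "0 < \<delta>" "\<delta> < 1" and "\<alpha> \<ge> 1"
    and "1 / (real N + 1) < 1 - \<delta>"
  defines "K \<equiv> nat \<lceil>10 * \<alpha>^2 / (\<epsilon>^2 * \<delta>)\<rceil>"
  shows "real (2 * floorlog 2 ((floorlog 2 N + 1) * (2 * K))) \<le>
    space_const c * (log 2 (\<alpha> / \<epsilon>) + log 2 (1 / \<delta>) + log 2 (log 2 n))"
proof -
  define C0 where "C0 = 2 * log 2 (c + 2) + 2 * log 2 22 + 2"
  define \<kappa> where "\<kappa> = min (log 2 (log 2 3)) (log 2 ((2 powr c + 1) / 2 powr c))"
  define \<Sigma> where "\<Sigma> = log 2 (\<alpha> / \<epsilon>) + log 2 (1 / \<delta>) + log 2 (log 2 n)"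
  have "0 < C0" using \<open>c > 0\<close> by (simp add: C0_def add_pos_nonneg)
  have "0 < \<kappa>" unfolding \<kappa>_def by (rule space_const_denominator_pos)
  have "\<kappa> \<le> \<Sigma>" unfolding \<kappa>_def \<Sigma>_def using assms(1-9) by (rule space_budget_lower_bound)
  have "0 < log 2 (\<alpha> / \<epsilon>)" "0 < log 2 (1 / \<delta>)" "0 \<le> log 2 (log 2 n)"
    using assms(2,4-8) by simp_all
  then have "C0 + 2 * log 2 (log 2 n) + 4 * log 2 (\<alpha> / \<epsilon>) + 2 * log 2 (1 / \<delta>) \<le> C0 + 4 * \<Sigma>"
    unfolding \<Sigma>_def by argo
  then have "real (2 * floorlog 2 ((floorlog 2 N + 1) * (2 * K))) \<le> C0 + 4 * \<Sigma>"
    using counter_bits_le[OF assms(1-8)] unfolding C0_def K_def by linarith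
  also have "C0 \<le> C0 / \<kappa> * \<Sigma>"
    using \<open>\<kappa> \<le> \<Sigma>\<close> \<open>0 < \<kappa>\<close> \<open>0 < C0\<close> by (simp add: field_simps mult_left_mono)
  finally show ?thesis by (simp add: space_const_def C0_def \<kappa>_def \<Sigma>_def algebra_simps)
qed

definition l1_estimable :: "real \<Rightarrow> real \<Rightarrow> real \<Rightarrow> nat \<Rightarrow> nat \<Rightarrow> nat \<Rightarrow> real \<Rightarrow> bool" where
  "l1_estimable \<alpha> \<epsilon> \<delta> n m M s \<longleftrightarrow>
     (\<exists>A. let S = {xs. valid_stream n m M xs \<and> strict_turnstile xs \<and> alpha_property \<alpha> n xs} in
        space_bound A S s \<and>
        (\<forall>xs\<in>S. measure_pmf.prob (result A xs)
            {y. \<bar>y - l1_norm n (freq xs)\<bar> \<le> \<epsilon> * l1_norm n (freq xs)} \<ge> 1 - \<delta>))"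

lemma l1_estimableI:
  assumes "\<And>xs k \<sigma>. valid_stream n m M xs \<Longrightarrow> k \<le> length xs \<Longrightarrow> \<sigma> \<in> set_pmf (run A (take k xs)) \<Longrightarrow>
      real (length \<sigma>) \<le> s"
    and "\<And>xs. valid_stream n m M xs \<Longrightarrow> strict_turnstile xs \<Longrightarrow> alpha_property \<alpha> n xs \<Longrightarrow>
      1 - \<delta> \<le> measure_pmf.prob (result A xs) {y. \<bar>y - l1_norm n (freq xs)\<bar> \<le> \<epsilon> * l1_norm n (freq xs)}"
  shows "l1_estimable \<alpha> \<epsilon> \<delta> n m M s"
  unfolding l1_estimable_def Let_def space_bound_def using assms by blast

lemma guess_alg_estimates:
  assumes "1 - \<delta> \<le> 1 / (real (m * M) + 1)" and "0 \<le> \<epsilon>" and "0 \<le> s"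
  shows "l1_estimable \<alpha> \<epsilon> \<delta> n m M s"
  by (rule l1_estimableI[where A = "guess_alg (m * M)"]) (use assms in \<open>simp_all add: run_guess_alg guess_alg_accurate\<close>)

lemma counter_alg_estimates:
  assumes "c > 0" and "n \<ge> 2" and "real (m * M) \<le> real n powr c"
    and "0 < \<epsilon>" "\<epsilon> < 1" and "0 < \<delta>" "\<delta> < 1" and "\<alpha> \<ge> 1"
    and "1 / (real (m * M) + 1) < 1 - \<delta>"
  shows "l1_estimable \<alpha> \<epsilon> \<delta> n m M (space_const c * (log 2 (\<alpha> / \<epsilon>) + log 2 (1 / \<delta>) + log 2 (log 2 n)))"
proof -
  define K where "K = nat \<lceil>10 * \<alpha>^2 / (\<epsilon>^2 * \<delta>)\<rceil>"
  define J where "J = floorlog 2 (m * M)"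
  have "0 < 10 * \<alpha>^2 / (\<epsilon>^2 * \<delta>)" using assms(4,6,8) by simp
  then have "1 \<le> K" unfolding K_def by linarith
  interpret approx_counter K J by unfold_locales (rule \<open>1 \<le> K\<close>)
  have "m * M < 2 ^ J" unfolding J_def by (rule less_two_pow_floorlog)
  also have "\<dots> \<le> cap" using \<open>1 \<le> K\<close> by (simp add: cap_def)
  finally have "m * M \<le> cap" by simp
  show ?thesis
  proof (rule l1_estimableI[where A = counter_alg])
    show "real (length \<sigma>) \<le> space_const c * (log 2 (\<alpha> / \<epsilon>) + log 2 (1 / \<delta>) + log 2 (log 2 n))"
      if "\<sigma> \<in> set_pmf (run counter_alg (take k xs))" for xs k \<sigma>
      using length_run_counter_alg[OF that] counter_bits_le_space_budget[OF assms, folded K_def J_def]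
      by (simp add: width_def)
    show "1 - \<delta> \<le> measure_pmf.prob (result counter_alg xs)
        {y. \<bar>y - l1_norm n (freq xs)\<bar> \<le> \<epsilon> * l1_norm n (freq xs)}"
      if "valid_stream n m M xs" "strict_turnstile xs" "alpha_property \<alpha> n xs" for xs
      using that \<open>m * M \<le> cap\<close> assms(4,6,8) by (rule counter_alg_accurate) (simp add: K_def real_nat_ceiling_ge)
  qed
qed

theorem theorem5p2:
  fixes c :: real
  assumes "c > 0"
  shows "\<exists>C>0. \<forall>(n::nat) (m::nat) (M::nat) (\<epsilon>::real) (\<delta>::real) (\<alpha>::real).
     n \<ge> 2 \<and> real (m * M) \<le> real n powr c \<and> 0 < \<epsilon> \<and> \<epsilon> < 1 \<and> 0 < \<delta> \<and> \<delta> < 1 \<and> \<alpha> \<ge> 1 \<longrightarrow>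
     (\<exists>A. let S = {xs. valid_stream n m M xs \<and> strict_turnstile xs \<and> alpha_property \<alpha> n xs} in
        space_bound A S (C * (log 2 (\<alpha> / \<epsilon>) + log 2 (1 / \<delta>) + log 2 (log 2 n))) \<and>
        (\<forall>xs\<in>S. measure_pmf.prob (result A xs)
            {y. \<bar>y - l1_norm n (freq xs)\<bar> \<le> \<epsilon> * l1_norm n (freq xs)} \<ge> 1 - \<delta>))"
proof (intro exI[of _ "space_const c"] conjI allI impI)
  show "0 < space_const c" using assms by (rule space_const_pos)
  fix n m M :: nat and \<epsilon> \<delta> \<alpha> :: real
  assume params: "n \<ge> 2 \<and> real (m * M) \<le> real n powr c \<and> 0 < \<epsilon> \<and> \<epsilon> < 1 \<and> 0 < \<delta> \<and> \<delta> < 1 \<and> \<alpha> \<ge> 1"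
  have "0 < log 2 (\<alpha> / \<epsilon>)" "0 < log 2 (1 / \<delta>)" "0 \<le> log 2 (log 2 n)" using params by simp_all
  then have "0 \<le> space_const c * (log 2 (\<alpha> / \<epsilon>) + log 2 (1 / \<delta>) + log 2 (log 2 n))"
    using space_const_pos[OF assms] by simp
  then have "l1_estimable \<alpha> \<epsilon> \<delta> n m M (space_const c * (log 2 (\<alpha> / \<epsilon>) + log 2 (1 / \<delta>) + log 2 (log 2 n)))"
    using params guess_alg_estimates counter_alg_estimates[OF assms]
    by (cases "1 - \<delta> \<le> 1 / (real (m * M) + 1)") auto
  then show "\<exists>A. let S = {xs. valid_stream n m M xs \<and> strict_turnstile xs \<and> alpha_property \<alpha> n xs} in
        space_bound A S (space_const c * (log 2 (\<alpha> / \<epsilon>) + log 2 (1 / \<delta>) + log 2 (log 2 n))) \<and>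
        (\<forall>xs\<in>S. measure_pmf.prob (result A xs)
            {y. \<bar>y - l1_norm n (freq xs)\<bar> \<le> \<epsilon> * l1_norm n (freq xs)} \<ge> 1 - \<delta>)"
    by (simp only: l1_estimable_def)
qed

end
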